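(* Assume the Setup below and $|n-p-1|>1$. Let $m=\min(p,n-1)$ and let $\sigma_1\ge\dots\ge\sigma_m>0$ be the nonzero singular values of $\Sigma^{-1/2}(X-\bar X)$ (which are almost surely positive). Then, almost surely: (1) for either choice $\hat\alpha=c$ (with $c_0=0$) or $\hat\alpha=c\,\mathrm{tr}(W)$ (with $c_0=c$), $\hat a_S\to|n-p-1|-1$ as $c\to0$; (2) as $c\to\infty$, for each $i=1,\dots,m$, $$\frac{\hat a_S}{\sigma_i^2+\hat\alpha}\to\begin{cases}(n-1)p/\mathrm{tr}(W) & \text{if }\hat\alpha=c,\\ \{(n-1)p-2\}/\mathrm{tr}(W) & \text{if }\hat\alpha=c\,\mathrm{tr}(W).\end{cases}$$
   Context: Setup. Let $n\ge 2$, $p\ge1$. Let $X=(x_1,\dots,x_n)$ be a random $p\times n$ matrix whose columns are independent with $x_i\sim\mathcal N_p(\theta_i,\Sigma)$, where $\Sigma$ is a known $p\times p$ positive definite matrix and $\Theta=(\theta_1,\dots,\theta_n)\in\mathbb R^{p\times n}$. Let $\bar x=n^{-1}\sum_{j=1}^n x_j$, $\bar X=\bar x\,1_n^\top$ with $1_n=(1,\dots,1)^\top$, and $W=(X-\bar X)(X-\bar X)^\top\Sigma^{-1}$. The ridge statistic is $\hat\alpha=c$ or $\hat\alpha=c\,\mathrm{tr}(W)$ with a constant $c>0$; correspondingly $c_0=0$ or $c_0=c$. Put $V=(W+\hat\alpha I_p)^{-1}$ and define the estimated weight $$\hat a_S=\frac{(n-p-1)\mathrm{tr}(V)+\hat\alpha(\mathrm{tr}V)^2}{\mathrm{tr}(V^2W)}-(2c_0+1).$$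 *)

theory Defs
  imports "HOL-Analysis.Analysis"
begin

definition pos_def_mat :: "real^'p^'p \<Rightarrow> bool" where
  "pos_def_mat S \<longleftrightarrow> transpose S = S \<and> (\<forall>x. x \<noteq> 0 \<longrightarrow> x \<bullet> (S *v x) > 0)"

definition psd_sqrt_mat :: "real^'p^'p \<Rightarrow> real^'p^'p" where
  "psd_sqrt_mat S = (THE R. pos_def_mat R \<and> R ** R = S)"

definition inv_sqrt_mat :: "real^'p^'p \<Rightarrow> real^'p^'p" where
  "inv_sqrt_mat S = psd_sqrt_mat (matrix_inv S)"

definition singular_value :: "real^'n^'p \<Rightarrow> real \<Rightarrow> bool" where
  "singular_value A s \<longleftrightarrow> s \<ge> 0 \<and> (\<exists>v. v \<noteq> 0 \<and> (transpose A ** A) *v v = (s^2) *\<^sub>R v)"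

definition centered :: "real^'n^'p \<Rightarrow> real^'n^'p" where
  "centered X = (\<chi> i j. X$i$j - (\<Sum>k\<in>UNIV. X$i$k) / real CARD('n))"

definition Wmat :: "real^'n^'p \<Rightarrow> real^'p^'p \<Rightarrow> real^'p^'p" where
  "Wmat X Sig = centered X ** transpose (centered X) ** matrix_inv Sig"

definition a_S :: "real^'p^'p \<Rightarrow> nat \<Rightarrow> real \<Rightarrow> real \<Rightarrow> real" where
  "a_S W n \<alpha> c0 =
     (let V = matrix_inv (W + \<alpha> *\<^sub>R mat 1)
      in ((real n - real CARD('p) - 1) * trace V + \<alpha> * (trace V)^2) / trace (V ** V ** W)
         - (2 * c0 + 1))"

end

theory Submission
  imports Defs "HOL-Real_Asymp.Real_Asymp"
begin

(*
  With S = Sig^-1 and C = X - Xbar, the matrix W = C C^T S is self-adjoint and positive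
  semidefinite for the inner product x^T S y. Maximising the Rayleigh quotient on invariant
  subspaces diagonalises it: W = Q diag(mu) Q^-1 with mu >= 0, exactly rank C = min(p, n-1) of the
  mu_j being nonzero. Then tr V = sum 1/(mu_j + alpha) and tr(V^2 W) = sum mu_j/(mu_j + alpha)^2,
  so a_S is an explicit rational function of alpha; put N = n - p - 1.
  As alpha -> 0, the k = p - min(p, n-1) zero eigenvalues contribute k/alpha to tr V, leaving a
  pole k(N + k)/alpha in the numerator. It vanishes because k = 0 or k = -N, and the rest tends to
  N + 2k = |N|. As alpha -> infinity, alpha tr V -> p and alpha^2 tr(V^2 W) -> tr W, so
  a_S / alpha -> (N p + p^2) / tr W = (n-1) p / tr W.
*)

definition diag_mat :: "('n \<Rightarrow> 'a::zero) \<Rightarrow> 'a^'n^'n" where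
  "diag_mat d = (\<chi> i j. if i = j then d i else 0)"

lemma diag_mat_mult: "diag_mat a ** diag_mat b = diag_mat (\<lambda>i. a i * b i :: 'a::semiring_1)"
proof -
  have "(\<Sum>k\<in>UNIV. (if i = k then a i else 0) * (if k = j then b k else 0))
        = (\<Sum>k\<in>UNIV. if k = i then a i * (if k = j then b k else 0) else 0)" for i j
    by (rule sum.cong) auto
  then have "(\<Sum>k\<in>UNIV. (if i = k then a i else 0) * (if k = j then b k else 0))
        = (if i = j then a i * b i else 0)" for i j
    by simp
  then show ?thesis by (simp add: diag_mat_def matrix_matrix_mult_def vec_eq_iff)
qed

lemma mat_eq_diag_mat: "mat c = diag_mat (\<lambda>_. c)"
  by (simp add: mat_def diag_mat_def)

lemma trace_diag_mat: "trace (diag_mat d) = sum d UNIV"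
  by (simp add: trace_def diag_mat_def)

lemma rank_diag_mat: "rank (diag_mat (\<mu> :: 'n::finite \<Rightarrow> real)) = card {j. \<mu> j \<noteq> 0}"
proof -
  define A where "A = (\<lambda>j. axis j (1::real)) ` {j. \<mu> j \<noteq> 0}"
  have "row i (diag_mat \<mu>) = \<mu> i *\<^sub>R axis i 1" for i
    by (simp add: row_def diag_mat_def axis_def vec_eq_iff)
  then have rows: "rows (diag_mat \<mu>) = (\<lambda>i. \<mu> i *\<^sub>R axis i 1) ` UNIV"
    by (auto simp: rows_def)
  have "\<mu> i *\<^sub>R axis i 1 \<in> span A" for i
    by (cases "\<mu> i = 0") (simp_all add: A_def span_zero span_scale span_base)
  then have "rows (diag_mat \<mu>) \<subseteq> span A"
    by (auto simp: rows)
  moreover have "A \<subseteq> span (rows (diag_mat \<mu>))"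
  proof
    fix a assume "a \<in> A"
    then obtain i where a: "a = axis i 1" and "\<mu> i \<noteq> 0" by (auto simp: A_def)
    then have "a = (1 / \<mu> i) *\<^sub>R (\<mu> i *\<^sub>R axis i 1)" by simp
    moreover have "\<mu> i *\<^sub>R axis i 1 \<in> rows (diag_mat \<mu>)" by (simp add: rows)
    ultimately show "a \<in> span (rows (diag_mat \<mu>))"
      by (simp add: span_base span_scale del: scaleR_scaleR)
  qed
  moreover have "independent A"
    by (rule independent_mono[OF independent_Basis]) (auto simp: A_def Basis_vec_def)
  ultimately have "rank (diag_mat \<mu>) = card A"
    using subset_le_dim dim_eq_card_independent by (metis row_rank_def le_antisym)
  also have "\<dots> = card {j. \<mu> j \<noteq> 0}"
    unfolding A_def by (rule card_image) (auto simp: inj_on_def axis_eq_axis)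
  finally show ?thesis .
qed

lemma matrix_add_rdistrib: "((A::'a::semiring_1^'m^'n) + B) ** C = A ** C + B ** C"
  by (simp add: matrix_matrix_mult_def vec_eq_iff algebra_simps sum.distrib)

lemma matrix_inv_left_right:
  fixes A :: "real^'n^'n"
  assumes "invertible A"
  shows "A ** matrix_inv A = mat 1" "matrix_inv A ** A = mat 1"
  using someI_ex[OF assms[unfolded invertible_def]] unfolding matrix_inv_def by auto

lemma matrix_inv_unique:
  fixes A N :: "real^'n^'n"
  assumes "A ** N = mat 1"
  shows "matrix_inv A = N"
proof -
  have "invertible A" using assms invertible_right_inverse by blast
  then have "matrix_inv A = (matrix_inv A ** A) ** N"
    by (simp add: matrix_mul_assoc[symmetric] assms)
  also have "\<dots> = N" using matrix_inv_left_right(2)[OF \<open>invertible A\<close>] by simp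
  finally show ?thesis .
qed

lemma rank_mult_right_invertible:
  fixes A :: "real^'n^'m" and S Si :: "real^'n^'n"
  assumes "S ** Si = mat 1"
  shows "rank (A ** S) = rank A"
proof (rule antisym)
  show "rank (A ** S) \<le> rank A" by (rule rank_mul_le_left)
  have "rank A = rank (A ** S ** Si)" by (metis assms matrix_mul_assoc matrix_mul_rid)
  also have "\<dots> \<le> rank (A ** S)" by (rule rank_mul_le_left)
  finally show "rank A \<le> rank (A ** S)" .
qed

lemma rank_mult_left_invertible:
  fixes A :: "real^'n^'m" and Q Qi :: "real^'m^'m"
  assumes "Qi ** Q = mat 1"
  shows "rank (Q ** A) = rank A"
proof (rule antisym)
  show "rank (Q ** A) \<le> rank A" by (rule rank_mul_le_right)
  have "rank A = rank (Qi ** (Q ** A))" by (metis assms matrix_mul_assoc matrix_mul_lid)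
  also have "\<dots> \<le> rank (Q ** A)" by (rule rank_mul_le_right)
  finally show "rank A \<le> rank (Q ** A)" .
qed

context
  fixes Q Qi :: "real^'n^'n"
  assumes right_inv: "Q ** Qi = mat 1" and left_inv: "Qi ** Q = mat 1"
begin

lemma trace_similar: "trace (Q ** D ** Qi) = trace D"
  by (metis trace_mul_sym matrix_mul_assoc left_inv matrix_mul_lid)

lemma rank_similar: "rank (Q ** D ** Qi) = rank D"
  by (simp add: rank_mult_right_invertible[OF left_inv] rank_mult_left_invertible[OF left_inv])

lemma similar_mult: "(Q ** A ** Qi) ** (Q ** B ** Qi) = Q ** (A ** B) ** Qi"
  by (metis left_inv matrix_mul_assoc matrix_mul_rid)

lemma similar_add_scaleR_mat:
  "Q ** A ** Qi + \<alpha> *\<^sub>R mat 1 = Q ** (A + \<alpha> *\<^sub>R mat 1) ** Qi"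
  by (simp add: matrix_add_ldistrib matrix_add_rdistrib matrix_scalar_ac
      scalar_matrix_assoc[symmetric] right_inv)

lemma matrix_inv_similar_diag_shift:
  assumes "\<And>i. \<mu> i + \<alpha> \<noteq> 0"
  shows "matrix_inv (Q ** diag_mat \<mu> ** Qi + \<alpha> *\<^sub>R mat 1)
         = Q ** diag_mat (\<lambda>i. 1 / (\<mu> i + \<alpha>)) ** Qi"
proof (rule matrix_inv_unique)
  have "diag_mat \<mu> + \<alpha> *\<^sub>R mat 1 = diag_mat (\<lambda>i. \<mu> i + \<alpha>)"
    by (simp add: mat_def diag_mat_def vec_eq_iff)
  then show "(Q ** diag_mat \<mu> ** Qi + \<alpha> *\<^sub>R mat 1) ** (Q ** diag_mat (\<lambda>i. 1 / (\<mu> i + \<alpha>)) ** Qi)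
             = mat 1"
    using assms by (simp add: similar_add_scaleR_mat similar_mult diag_mat_mult
        mat_eq_diag_mat[symmetric] right_inv)
qed

end

lemma linear_coeff_nonpos:
  fixes a c :: real
  assumes "\<And>t. 2 * t * a + t\<^sup>2 * c \<le> 0"
  shows "a \<le> 0"
proof (rule ccontr)
  assume "\<not> a \<le> 0"
  define t where "t = a / (\<bar>c\<bar> + 1)"
  have "t > 0" "t * \<bar>c\<bar> \<le> a" using \<open>\<not> a \<le> 0\<close> by (auto simp: t_def field_simps)
  then have "t * (t * \<bar>c\<bar>) \<le> t * a" by (simp add: mult_left_mono)
  moreover have "t * (t * c) \<ge> t * (t * - \<bar>c\<bar>)"
    using \<open>t > 0\<close> by (intro mult_left_mono) auto
  moreover have "t * a > 0" using \<open>t > 0\<close> \<open>\<not> a \<le> 0\<close> by simp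
  ultimately have "2 * t * a + t\<^sup>2 * c > 0" by (simp add: power2_eq_square algebra_simps)
  with assms show False by (simp add: not_le[symmetric])
qed

lemma inner_matrix_vector_transpose: "x \<bullet> ((A::real^'n^'m) *v y) = (transpose A *v x) \<bullet> y"
  by (simp add: dot_lmul_matrix)

lemma inner_matrix_vector_expand:
  "(v + t *\<^sub>R z) \<bullet> ((M::real^'n^'n) *v (v + t *\<^sub>R z))
   = v \<bullet> (M *v v) + t * (v \<bullet> (M *v z) + z \<bullet> (M *v v)) + t\<^sup>2 * (z \<bullet> (M *v z))"
  by (simp add: matrix_vector_right_distrib matrix_vector_mult_scaleR inner_add_left
      inner_add_right power2_eq_square distrib_left)

locale selfadjoint_wrt =
  fixes S W :: "real^'n^'n"
  assumes S_sym: "transpose S = S" and S_pos: "\<And>x. x \<noteq> 0 \<Longrightarrow> x \<bullet> (S *v x) > 0"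
    and W_selfadjoint: "transpose (S ** W) = S ** W"
begin

lemma S_inner_commute: "x \<bullet> (S *v y) = y \<bullet> (S *v x)"
  by (metis inner_matrix_vector_transpose S_sym inner_commute)

lemma S_inner_selfadjoint: "x \<bullet> (S *v (W *v y)) = (W *v x) \<bullet> (S *v y)"
proof -
  have "x \<bullet> (S *v (W *v y)) = ((S ** W) *v x) \<bullet> y"
    by (metis inner_matrix_vector_transpose W_selfadjoint matrix_vector_mul_assoc)
  also have "\<dots> = (W *v x) \<bullet> (S *v y)"
    by (metis S_inner_commute inner_commute matrix_vector_mul_assoc)
  finally show ?thesis .
qed

lemma S_inner_eq_0_iff: "x \<bullet> (S *v x) = 0 \<longleftrightarrow> x = 0"
  using S_pos[of x] by (cases "x = 0") auto

lemma S_inner_nonneg: "x \<bullet> (S *v x) \<ge> 0"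
  using S_pos[of x] by (cases "x = 0") auto

text \<open>Along v + t z with the residual z = W v - l v, the form y \<bullet> S W y - l y \<bullet> S y has linear
  coefficient 2 z \<bullet> S z, so maximality at t = 0 forces z = 0.\<close>
lemma rayleigh_maximizer_eigenvector:
  assumes U: "subspace U" and inv: "\<And>x. x \<in> U \<Longrightarrow> W *v x \<in> U" and v: "v \<in> U"
    and max: "\<And>y. y \<in> U \<Longrightarrow> y \<bullet> (S *v (W *v y)) \<le> l * (y \<bullet> (S *v y))"
    and attained: "v \<bullet> (S *v (W *v v)) = l * (v \<bullet> (S *v v))"
  shows "W *v v = l *\<^sub>R v"
proof -
  define z where "z = W *v v - l *\<^sub>R v"
  have zU: "z \<in> U" unfolding z_def using v inv U by (simp add: subspace_diff subspace_scale)
  define a where "a = z \<bullet> (S *v z)"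
  define c where "c = z \<bullet> (S *v (W *v z)) - l * (z \<bullet> (S *v z))"
  have "2 * t * a + t\<^sup>2 * c \<le> 0" for t
  proof -
    have "v + t *\<^sub>R z \<in> U" using v zU U by (simp add: subspace_add subspace_scale)
    moreover have "v \<bullet> (S *v (W *v z)) = z \<bullet> (S *v (W *v v))"
      by (metis S_inner_selfadjoint S_inner_commute)
    moreover have "z \<bullet> (S *v (W *v v)) - l * (z \<bullet> (S *v v)) = a"
      unfolding a_def z_def by (simp add: algebra_simps inner_diff_right)
    ultimately show ?thesis
      using max[of "v + t *\<^sub>R z"] attained S_inner_commute[of v z]
        inner_matrix_vector_expand[of v t z "S ** W"] inner_matrix_vector_expand[of v t z S]
      by (simp add: matrix_vector_mul_assoc c_def algebra_simps power2_eq_square)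
  qed
  then have "a \<le> 0" by (rule linear_coeff_nonpos)
  then have "z = 0" using S_inner_nonneg[of z] S_inner_eq_0_iff[of z] by (simp add: a_def)
  then show ?thesis by (simp add: z_def)
qed

lemma rayleigh_quotient_attains_max:
  assumes U: "subspace U" and u: "u \<in> U" "u \<noteq> 0"
  obtains v l where "v \<in> U" "v \<noteq> 0" "v \<bullet> (S *v (W *v v)) = l * (v \<bullet> (S *v v))"
    "\<And>y. y \<in> U \<Longrightarrow> y \<bullet> (S *v (W *v y)) \<le> l * (y \<bullet> (S *v y))"
proof -
  define K where "K = U \<inter> sphere 0 1"
  define R where "R = (\<lambda>x. (x \<bullet> (S *v (W *v x))) / (x \<bullet> (S *v x)))"
  have "compact K" unfolding K_def
    by (intro closed_Int_compact closed_subspace U compact_sphere)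
  moreover have "u /\<^sub>R norm u \<in> K" using u U by (simp add: K_def subspace_scale)
  moreover have K0: "x \<noteq> 0" if "x \<in> K" for x using that by (auto simp: K_def)
  moreover have "continuous_on K R" unfolding R_def matrix_vector_mul_assoc
    by (intro continuous_intros) (use K0 S_inner_eq_0_iff in auto)
  ultimately obtain v where v: "v \<in> K" and vmax: "\<And>y. y \<in> K \<Longrightarrow> R y \<le> R v"
    using continuous_attains_sup[of K R] by blast
  have bound: "y \<bullet> (S *v (W *v y)) \<le> R v * (y \<bullet> (S *v y))" if "y \<in> U" for y
  proof (cases "y = 0")
    case False
    then have "y /\<^sub>R norm y \<in> K" using that U by (simp add: K_def subspace_scale)
    moreover have "R (y /\<^sub>R norm y) = R y"
      using False by (simp add: R_def matrix_vector_mult_scaleR power2_eq_square)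
    ultimately have "R y \<le> R v" using vmax by metis
    then show ?thesis using S_pos[OF False] by (simp add: R_def divide_le_eq)
  qed simp
  have "v \<bullet> (S *v (W *v v)) = R v * (v \<bullet> (S *v v))"
    using S_pos[OF K0[OF v]] by (simp add: R_def)
  then show ?thesis using v K0[OF v] bound by (intro that[of v "R v"]) (auto simp: K_def)
qed

lemma invariant_subspace_has_eigenvector:
  assumes "subspace U" "\<And>x. x \<in> U \<Longrightarrow> W *v x \<in> U" "u \<in> U" "u \<noteq> 0"
  obtains v l where "v \<in> U" "v \<noteq> 0" "W *v v = l *\<^sub>R v"
  by (metis assms rayleigh_quotient_attains_max rayleigh_maximizer_eigenvector)

text \<open>The S-orthogonal complement of an eigenvector is again invariant, which drives the induction.\<close>
lemma invariant_subspace_eigenvector_basis: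
  assumes "subspace U" "\<And>x. x \<in> U \<Longrightarrow> W *v x \<in> U"
  obtains B where "B \<subseteq> U" "independent B" "U \<subseteq> span B" "\<And>b. b \<in> B \<Longrightarrow> \<exists>l. W *v b = l *\<^sub>R b"
  using assms
proof (induction "dim U" arbitrary: U thesis rule: less_induct)
  case less
  show ?case
  proof (cases "\<exists>u\<in>U. u \<noteq> 0")
    case False
    then show ?thesis by (intro less.prems(1)[of "{}"]) (auto simp: independent_empty)
  next
    case True
    then obtain v l where v: "v \<in> U" "v \<noteq> 0" and vl: "W *v v = l *\<^sub>R v"
      using invariant_subspace_has_eigenvector[OF less.prems(2,3)] by metis
    define U' where "U' = {x\<in>U. x \<bullet> (S *v v) = 0}"
    have sU': "subspace U'" using less.prems(2)
      unfolding U'_def subspace_def by (auto simp: inner_add_left)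
    have "W *v x \<in> U'" if "x \<in> U'" for x
      using that less.prems(3) S_inner_selfadjoint[of x v]
      by (simp add: U'_def vl matrix_vector_mult_scaleR)
    moreover have "dim U' < dim U"
    proof -
      have "v \<notin> U'" using S_inner_eq_0_iff[of v] v by (simp add: U'_def)
      then have "U' \<subset> U" using v by (auto simp: U'_def)
      then show ?thesis
        using sU' less.prems(2) by (metis dim_psubset span_eq_iff)
    qed
    ultimately obtain B' where B': "B' \<subseteq> U'" "independent B'" "U' \<subseteq> span B'"
      "\<And>b. b \<in> B' \<Longrightarrow> \<exists>l. W *v b = l *\<^sub>R b"
      using less.hyps[OF _ _ sU'] by metis
    have "independent (insert v B')"
      using B'(2) span_minimal[OF B'(1) sU'] v S_inner_eq_0_iff[of v]
      by (auto simp: independent_insert U'_def)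
    moreover have "x \<in> span (insert v B')" if "x \<in> U" for x
    proof -
      define c where "c = (x \<bullet> (S *v v)) / (v \<bullet> (S *v v))"
      have "x - c *\<^sub>R v \<in> U'"
        using that v less.prems(2) S_inner_eq_0_iff[of v]
        by (simp add: U'_def c_def subspace_diff subspace_scale inner_diff_left)
      then have "x - c *\<^sub>R v \<in> span (insert v B')"
        using B'(3) span_mono[of B' "insert v B'"] by auto
      moreover have "c *\<^sub>R v \<in> span (insert v B')" by (simp add: span_base span_scale)
      ultimately have "(x - c *\<^sub>R v) + c *\<^sub>R v \<in> span (insert v B')" by (rule span_add)
      then show ?thesis by simp
    qed
    ultimately show ?thesis
      using B'(1,4) v vl by (intro less.prems(1)[of "insert v B'"]) (auto simp: U'_def)
  qed
qed

lemma similar_diag_mat: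
  obtains Q Qi :: "real^'n^'n" and \<mu> where "Q ** Qi = mat 1" "Qi ** Q = mat 1"
    "W = Q ** diag_mat \<mu> ** Qi" "\<And>j. column j Q \<noteq> 0"
    "\<And>j. W *v column j Q = \<mu> j *\<^sub>R column j Q"
proof -
  obtain B where B: "independent B" "UNIV \<subseteq> span B" "\<And>b. b \<in> B \<Longrightarrow> \<exists>l. W *v b = l *\<^sub>R b"
    by (rule invariant_subspace_eigenvector_basis[OF subspace_UNIV]) auto
  have "finite B" using indep_card_eq_dim_span[OF B(1)] by simp
  moreover have "card B = CARD('n)"
    using basis_card_eq_dim[of B UNIV] B by (simp add: dim_UNIV)
  ultimately obtain e where e: "bij_betw e (UNIV::'n set) B"
    using finite_same_card_bij[of "UNIV::'n set" B] by auto
  then have eB: "e j \<in> B" for j by (auto simp: bij_betw_def)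
  define \<mu> where "\<mu> j = (SOME l. W *v e j = l *\<^sub>R e j)" for j
  have eig: "W *v e j = \<mu> j *\<^sub>R e j" for j
    unfolding \<mu>_def using B(3)[OF eB] by (rule someI_ex)
  have e0: "e j \<noteq> 0" for j using eB[of j] B(1) dependent_zero by metis
  define Q :: "real^'n^'n" where "Q = (\<chi> i j. e j $ i)"
  have WQ: "W ** Q = Q ** diag_mat \<mu>"
    using eig by (simp add: Q_def diag_mat_def matrix_matrix_mult_def matrix_vector_mult_def
        vec_eq_iff if_distrib if_distribR sum.delta' mult.commute cong: if_cong)
  have "Q *v axis j 1 = e j" for j
    by (simp add: matrix_vector_mult_basis column_def Q_def vec_eq_iff)
  then have "B \<subseteq> range ((*v) Q)"
    using e by (auto simp: bij_betw_def) (metis rangeI)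
  then have "span B \<subseteq> range ((*v) Q)"
    by (rule span_minimal[OF _ linear_subspace_image[OF matrix_vector_mul_linear subspace_UNIV]])
  then obtain Qi where QQi: "Q ** Qi = mat 1"
    using B(2) matrix_right_invertible_surjective[of Q] by blast
  then have "Qi ** Q = mat 1" using matrix_left_right_inverse by blast
  moreover have "W = Q ** diag_mat \<mu> ** Qi" by (metis QQi WQ matrix_mul_assoc matrix_mul_rid)
  moreover have "column j Q = e j" for j by (simp add: column_def Q_def vec_eq_iff)
  ultimately show ?thesis using QQi eig e0 that by simp
qed

lemma psd_similar_diag_mat:
  assumes psd: "\<And>x. x \<bullet> (S *v (W *v x)) \<ge> 0"
  obtains Q Qi :: "real^'n^'n" and \<mu> where "Q ** Qi = mat 1" "Qi ** Q = mat 1"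
    "W = Q ** diag_mat \<mu> ** Qi" "\<And>j. \<mu> j \<ge> 0"
proof -
  obtain Q Qi :: "real^'n^'n" and \<mu> where "Q ** Qi = mat 1" "Qi ** Q = mat 1"
    "W = Q ** diag_mat \<mu> ** Qi"
    and v: "\<And>j. column j Q \<noteq> 0" "\<And>j. W *v column j Q = \<mu> j *\<^sub>R column j Q"
    using similar_diag_mat by blast
  moreover have "\<mu> j \<ge> 0" for j
  proof -
    have "0 \<le> \<mu> j * (column j Q \<bullet> (S *v column j Q))"
      using psd[of "column j Q"] v(2) by (simp add: matrix_vector_mult_scaleR)
    then show ?thesis using S_pos[OF v(1)[of j]] by (simp add: zero_le_mult_iff)
  qed
  ultimately show ?thesis using that by blast
qed

end

lemma rank_mult_transpose_self: "rank ((C::real^'n^'m) ** transpose C) = rank C"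
proof -
  define T where "T = range ((*v) (transpose C))"
  have "subspace T" unfolding T_def
    by (rule linear_subspace_image[OF matrix_vector_mul_linear subspace_UNIV])
  have "inj_on ((*v) C) T"
  proof (rule inj_onI)
    fix x y assume "x \<in> T" "y \<in> T" and eq: "C *v x = C *v y"
    then obtain a b where "x = transpose C *v a" "y = transpose C *v b" by (auto simp: T_def)
    then have d: "x - y = transpose C *v (a - b)" "C *v (transpose C *v (a - b)) = 0"
      using eq by (simp_all add: matrix_vector_mult_diff_distrib)
    then have "(transpose C *v (a - b)) \<bullet> (transpose C *v (a - b)) = 0"
      by (metis inner_matrix_vector_transpose inner_zero_right)
    then show "x = y" using d(1) by simp
  qed
  then have "dim ((*v) C ` T) = dim T"
    using dim_image_eq[OF matrix_vector_mul_linear] span_eq_iff \<open>subspace T\<close> by metis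
  moreover have "range ((*v) (C ** transpose C)) = (*v) C ` T"
    by (auto simp: T_def image_iff matrix_vector_mul_assoc[symmetric])
  ultimately show ?thesis
    using rank_dim_range[of "C ** transpose C"] rank_dim_range[of "transpose C", folded T_def]
    by (simp add: rank_transpose)
qed

lemma rank_centered_less: "rank (centered (X::real^'n^'p)) < CARD('n)"
proof -
  have "centered X *v (\<chi> j. 1) = 0"
    by (simp add: centered_def matrix_vector_mult_def vec_eq_iff sum_subtractf)
  moreover have "(\<chi> j. 1) \<noteq> (0::real^'n)" by (simp add: vec_eq_iff)
  ultimately have "\<not> inj ((*v) (centered X))"
    by (metis matrix_vector_mult_0_right inj_eq)
  then show ?thesis by (simp add: less_rank_noninjective)
qed

lemma pos_def_mat_matrix_inv:
  assumes "pos_def_mat (A::real^'n^'n)"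
  shows "pos_def_mat (matrix_inv A)" "matrix_inv A ** A = mat 1"
proof -
  have sym: "transpose A = A" and pos: "\<And>x. x \<noteq> 0 \<Longrightarrow> x \<bullet> (A *v x) > 0"
    using assms by (auto simp: pos_def_mat_def)
  have "\<forall>x. A *v x = 0 \<longrightarrow> x = 0" using pos by (metis inner_zero_right less_irrefl)
  then have "invertible A"
    by (simp add: matrix_left_invertible_ker invertible_left_inverse)
  note inv = matrix_inv_left_right[OF this]
  then show "matrix_inv A ** A = mat 1" by simp
  have "transpose (matrix_inv A) = matrix_inv A"
    using matrix_inv_unique[of A "transpose (matrix_inv A)"] inv
    by (metis matrix_transpose_mul sym transpose_mat)
  moreover have "x \<bullet> (matrix_inv A *v x) > 0" if "x \<noteq> 0" for x
  proof -
    have "matrix_inv A *v x \<noteq> 0"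
      using that inv by (metis matrix_vector_mul_assoc matrix_vector_mul_lid matrix_vector_mult_0_right)
    then show ?thesis
      using pos[of "matrix_inv A *v x"] inv by (simp add: matrix_vector_mul_assoc inner_commute)
  qed
  ultimately show "pos_def_mat (matrix_inv A)" by (simp add: pos_def_mat_def)
qed

lemma Wmat_similar_diag_mat:
  fixes X :: "real^'n^'p"
  assumes "pos_def_mat Sig"
    and "rank (inv_sqrt_mat Sig ** centered X) = min CARD('p) (CARD('n) - 1)"
  obtains Q Qi :: "real^'p^'p" and \<mu> where "Q ** Qi = mat 1" "Qi ** Q = mat 1"
    "Wmat X Sig = Q ** diag_mat \<mu> ** Qi" "\<And>j. \<mu> j \<ge> 0"
    "card {j. \<mu> j \<noteq> 0} = min CARD('p) (CARD('n) - 1)"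
proof -
  define S C where "S = matrix_inv Sig" and "C = centered X"
  have S: "transpose S = S" "\<And>x. x \<noteq> 0 \<Longrightarrow> x \<bullet> (S *v x) > 0" "S ** Sig = mat 1"
    using pos_def_mat_matrix_inv[OF assms(1)] by (auto simp: S_def pos_def_mat_def)
  have W: "Wmat X Sig = C ** transpose C ** S" by (simp add: Wmat_def C_def S_def)
  have selfadjoint: "transpose (S ** Wmat X Sig) = S ** Wmat X Sig"
    by (simp add: W matrix_transpose_mul S(1) matrix_mul_assoc)
  have psd: "x \<bullet> (S *v (Wmat X Sig *v x)) \<ge> 0" for x
    using inner_matrix_vector_transpose[of "S *v x" C "transpose C *v (S *v x)"]
      inner_matrix_vector_transpose[of x S] S(1)
    by (simp add: W matrix_vector_mul_assoc[symmetric] matrix_mul_assoc)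
  interpret selfadjoint_wrt S "Wmat X Sig"
    using S(1,2) selfadjoint by unfold_locales
  obtain Q Qi :: "real^'p^'p" and \<mu> where QQi: "Q ** Qi = mat 1" "Qi ** Q = mat 1"
      and Wd: "Wmat X Sig = Q ** diag_mat \<mu> ** Qi" and "\<And>j. \<mu> j \<ge> 0"
    using psd_similar_diag_mat[OF psd] by blast
  moreover have "rank C = min CARD('p) (CARD('n) - 1)"
    using rank_centered_less[of X] rank_bound[of C] rank_mul_le_right[of "inv_sqrt_mat Sig" C]
      assms(2) unfolding C_def by linarith
  then have "card {j. \<mu> j \<noteq> 0} = min CARD('p) (CARD('n) - 1)"
    using W Wd rank_similar[OF QQi] rank_diag_mat rank_mult_right_invertible[OF S(3)]
      rank_mult_transpose_self by metis
  ultimately show ?thesis using that by blast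
qed

definition spectral_weight :: "real \<Rightarrow> ('n::finite \<Rightarrow> real) \<Rightarrow> real \<Rightarrow> real" where
  "spectral_weight N \<mu> \<alpha> =
     (N * (\<Sum>j\<in>UNIV. 1 / (\<mu> j + \<alpha>)) + \<alpha> * (\<Sum>j\<in>UNIV. 1 / (\<mu> j + \<alpha>))\<^sup>2)
     / (\<Sum>j\<in>UNIV. \<mu> j / (\<mu> j + \<alpha>)\<^sup>2)"

lemma a_S_similar_diag_mat:
  fixes Q Qi :: "real^'p^'p"
  assumes "Q ** Qi = mat 1" "Qi ** Q = mat 1" and "\<And>j. \<mu> j + \<alpha> \<noteq> 0"
  shows "a_S (Q ** diag_mat \<mu> ** Qi) n \<alpha> c0
         = spectral_weight (real n - real CARD('p) - 1) \<mu> \<alpha> - (2 * c0 + 1)"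
proof -
  note similar = matrix_inv_similar_diag_shift[OF assms] similar_mult[OF assms(1,2)]
    trace_similar[OF assms(1,2)]
  have "(\<Sum>j\<in>UNIV. 1 / (\<mu> j + \<alpha>) * (1 / (\<mu> j + \<alpha>)) * \<mu> j) = (\<Sum>j\<in>UNIV. \<mu> j / (\<mu> j + \<alpha>)\<^sup>2)"
    by (simp add: power2_eq_square)
  then show ?thesis
    by (simp add: a_S_def spectral_weight_def similar diag_mat_mult trace_diag_mat)
qed

lemma spectral_weight_split_zero_eigenvalues:
  fixes \<mu> :: "'n::finite \<Rightarrow> real"
  assumes "\<alpha> > 0"
  defines "P \<equiv> {j. \<mu> j \<noteq> 0}" and "k \<equiv> real (card {j. \<mu> j = 0})"
  shows "spectral_weight N \<mu> \<alpha>
         = ((N + 2 * k) * (\<Sum>j\<in>P. 1 / (\<mu> j + \<alpha>)) + \<alpha> * (\<Sum>j\<in>P. 1 / (\<mu> j + \<alpha>))\<^sup>2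
            + k * (N + k) / \<alpha>) / (\<Sum>j\<in>P. \<mu> j / (\<mu> j + \<alpha>)\<^sup>2)"
proof -
  have split: "sum f UNIV = sum f P + sum f {j. \<mu> j = 0}" for f :: "'n \<Rightarrow> real"
    by (subst sum.union_disjoint[symmetric]) (auto simp: P_def intro: sum.cong)
  define a where "a = (\<Sum>j\<in>P. 1 / (\<mu> j + \<alpha>))"
  have "(\<Sum>j\<in>UNIV. 1 / (\<mu> j + \<alpha>)) = a + k / \<alpha>"
    by (simp add: split[of "\<lambda>j. 1 / (\<mu> j + \<alpha>)"] k_def a_def)
  moreover have "(\<Sum>j\<in>UNIV. \<mu> j / (\<mu> j + \<alpha>)\<^sup>2) = (\<Sum>j\<in>P. \<mu> j / (\<mu> j + \<alpha>)\<^sup>2)"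
    by (simp add: split[of "\<lambda>j. \<mu> j / (\<mu> j + \<alpha>)\<^sup>2"])
  moreover have "N * (a + k / \<alpha>) + \<alpha> * (a + k / \<alpha>)\<^sup>2 = (N + 2 * k) * a + \<alpha> * a\<^sup>2 + k * (N + k) / \<alpha>"
    using assms(1) by (simp add: field_simps power2_eq_square)
  ultimately show ?thesis by (simp add: spectral_weight_def a_def)
qed

lemma tendsto_spectral_weight_at_right_0:
  fixes \<mu> :: "'n::finite \<Rightarrow> real"
  assumes nonneg: "\<And>j. \<mu> j \<ge> 0" and "\<exists>j. \<mu> j > 0"
    and k: "card {j. \<mu> j = 0} = 0 \<or> N + real (card {j. \<mu> j = 0}) = 0"
  shows "(spectral_weight N \<mu> \<longlongrightarrow> N + 2 * real (card {j. \<mu> j = 0})) (at_right 0)"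
proof -
  define P where "P = {j. \<mu> j \<noteq> 0}"
  define k where "k = real (card {j. \<mu> j = 0})"
  define A B where "A = (\<lambda>\<alpha>. \<Sum>j\<in>P. 1 / (\<mu> j + \<alpha>))" and "B = (\<lambda>\<alpha>. \<Sum>j\<in>P. \<mu> j / (\<mu> j + \<alpha>)\<^sup>2)"
  have pos: "\<mu> j > 0" if "j \<in> P" for j using nonneg[of j] that by (auto simp: P_def)
  have "(A \<longlongrightarrow> A 0) (at_right 0)" "(B \<longlongrightarrow> B 0) (at_right 0)"
    unfolding A_def B_def by (intro tendsto_intros; use pos in fastforce)+
  moreover have "B 0 = A 0"
    unfolding A_def B_def by (rule sum.cong) (use pos in \<open>auto simp: power2_eq_square\<close>)
  moreover have "A 0 > 0"
    using assms(2) pos nonneg by (auto simp: A_def P_def intro!: sum_pos2)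
  ultimately have "((\<lambda>\<alpha>. ((N + 2 * k) * A \<alpha> + \<alpha> * (A \<alpha>)\<^sup>2) / B \<alpha>)
                   \<longlongrightarrow> ((N + 2 * k) * A 0 + 0 * (A 0)\<^sup>2) / B 0) (at_right 0)"
    by (intro tendsto_intros) auto
  then have "((\<lambda>\<alpha>. ((N + 2 * k) * A \<alpha> + \<alpha> * (A \<alpha>)\<^sup>2 + k * (N + k) / \<alpha>) / B \<alpha>)
               \<longlongrightarrow> N + 2 * k) (at_right 0)"
    using k \<open>B 0 = A 0\<close> \<open>A 0 > 0\<close> by (auto simp: k_def)
  moreover have "\<forall>\<^sub>F \<alpha> in at_right 0. \<alpha> > (0::real)" by (rule eventually_at_right_less)
  ultimately show ?thesis unfolding k_def
    by (rule Lim_transform_eventually[OF _ eventually_mono])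
      (simp add: spectral_weight_split_zero_eigenvalues A_def B_def P_def k_def)
qed

lemma tendsto_spectral_weight_over_at_top:
  fixes \<mu> :: "'n::finite \<Rightarrow> real"
  assumes nonneg: "\<And>j. \<mu> j \<ge> 0" and T: "sum \<mu> UNIV > 0"
  shows "((\<lambda>\<alpha>. spectral_weight N \<mu> \<alpha> / \<alpha>)
          \<longlongrightarrow> (N * CARD('n) + (real CARD('n))\<^sup>2) / sum \<mu> UNIV) at_top"
proof -
  define A1 B1 where "A1 = (\<lambda>\<alpha>. \<Sum>j\<in>UNIV. 1 / (\<mu> j + \<alpha>))"
    and "B1 = (\<lambda>\<alpha>. \<Sum>j\<in>UNIV. \<mu> j / (\<mu> j + \<alpha>)\<^sup>2)"
  define A B where "A = (\<lambda>\<alpha>. \<Sum>j\<in>UNIV. \<alpha> * (1 / (\<mu> j + \<alpha>)))"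
    and "B = (\<lambda>\<alpha>. \<Sum>j\<in>UNIV. \<alpha>\<^sup>2 * (\<mu> j / (\<mu> j + \<alpha>)\<^sup>2))"
  have "((\<lambda>\<alpha>::real. \<alpha> * (1 / (\<mu> j + \<alpha>))) \<longlongrightarrow> 1) at_top" for j by real_asymp
  then have "(A \<longlongrightarrow> (\<Sum>j\<in>(UNIV::'n set). 1)) at_top"
    unfolding A_def by (rule tendsto_sum)
  then have "(A \<longlongrightarrow> real CARD('n)) at_top" by simp
  moreover have "((\<lambda>\<alpha>::real. \<alpha>\<^sup>2 * (\<mu> j / (\<mu> j + \<alpha>)\<^sup>2)) \<longlongrightarrow> \<mu> j) at_top" for j by real_asymp
  then have "(B \<longlongrightarrow> sum \<mu> UNIV) at_top"
    unfolding B_def by (rule tendsto_sum)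
  ultimately have lim: "((\<lambda>\<alpha>. (N * A \<alpha> + (A \<alpha>)\<^sup>2) / B \<alpha>)
                   \<longlongrightarrow> (N * CARD('n) + (real CARD('n))\<^sup>2) / sum \<mu> UNIV) at_top"
    using T by (auto intro!: tendsto_eq_intros)
  have eq: "spectral_weight N \<mu> \<alpha> / \<alpha> = (N * A \<alpha> + (A \<alpha>)\<^sup>2) / B \<alpha>" if "\<alpha> > 0" for \<alpha>
  proof -
    have "A \<alpha> = \<alpha> * A1 \<alpha>" "B \<alpha> = \<alpha>\<^sup>2 * B1 \<alpha>" by (simp_all add: A_def B_def A1_def B1_def sum_distrib_left)
    moreover have "spectral_weight N \<mu> \<alpha> = (N * A1 \<alpha> + \<alpha> * (A1 \<alpha>)\<^sup>2) / B1 \<alpha>"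
      by (simp add: spectral_weight_def A1_def B1_def)
    ultimately show ?thesis using that
      by (cases "B1 \<alpha> = 0") (simp_all add: field_simps power2_eq_square)
  qed
  have "\<forall>\<^sub>F \<alpha> in at_top. (N * A \<alpha> + (A \<alpha>)\<^sup>2) / B \<alpha> = spectral_weight N \<mu> \<alpha> / \<alpha>"
    using eventually_gt_at_top[of 0] by eventually_elim (simp add: eq)
  with lim show ?thesis by (rule Lim_transform_eventually)
qed

lemma tendsto_affine_diff_over_at_top:
  fixes f :: "real \<Rightarrow> real"
  assumes "((\<lambda>x. f x / x) \<longlongrightarrow> L) at_top"
  shows "((\<lambda>x. (f x - (a * x + b)) / (s + x)) \<longlongrightarrow> L - a) at_top"
proof -
  have "((\<lambda>x. b / x) \<longlongrightarrow> 0) at_top" "((\<lambda>x. x / (s + x)) \<longlongrightarrow> 1) at_top" by real_asymp+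
  with assms have "((\<lambda>x. (f x / x - a - b / x) * (x / (s + x))) \<longlongrightarrow> (L - a - 0) * 1) at_top"
    by (intro tendsto_intros)
  then have "((\<lambda>x. (f x / x - a - b / x) * (x / (s + x))) \<longlongrightarrow> L - a) at_top" by simp
  moreover have "\<forall>\<^sub>F x in at_top. (f x / x - a - b / x) * (x / (s + x)) = (f x - (a * x + b)) / (s + x)"
    using eventually_gt_at_top[of 0] eventually_gt_at_top[of "-s"]
  proof eventually_elim
    case (elim x)
    then have "x \<noteq> 0" by linarith
    then have "f x / x - a - b / x = (f x - (a * x + b)) / x" by (simp add: field_simps)
    then show ?case using \<open>x \<noteq> 0\<close> by simp
  qed
  ultimately show ?thesis by (rule Lim_transform_eventually)
qed

lemma ridge_weight_limits:
  fixes f :: "real \<Rightarrow> real" and a :: "real \<Rightarrow> real \<Rightarrow> real"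
  assumes a: "\<And>\<alpha> c0. \<alpha> > 0 \<Longrightarrow> a \<alpha> c0 = f \<alpha> - (2 * c0 + 1)"
    and zero: "(f \<longlongrightarrow> L + 1) (at_right 0)" and top: "((\<lambda>\<alpha>. f \<alpha> / \<alpha>) \<longlongrightarrow> M) at_top"
    and T: "T > 0"
  shows "((\<lambda>c. a c 0) \<longlongrightarrow> L) (at_right 0)"
    and "((\<lambda>c. a (c * T) c) \<longlongrightarrow> L) (at_right 0)"
    and "((\<lambda>c. a c 0 / (s + c)) \<longlongrightarrow> M) at_top"
    and "((\<lambda>c. a (c * T) c / (s + c * T)) \<longlongrightarrow> M - 2 / T) at_top"
proof -
  have right: "\<forall>\<^sub>F c in at_right 0. c > (0::real)" by (rule eventually_at_right_less)
  have "((\<lambda>c. f c - 1) \<longlongrightarrow> L) (at_right 0)"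
    using tendsto_diff[OF zero tendsto_const[of 1]] by simp
  then show "((\<lambda>c. a c 0) \<longlongrightarrow> L) (at_right 0)"
    by (rule Lim_transform_eventually[OF _ eventually_mono[OF right]]) (simp add: a)
  have "filterlim (\<lambda>c. c * T) (at_right 0) (at_right 0)"
    using T by (intro tendsto_imp_filterlim_at_right)
      (auto intro!: tendsto_eq_intros eventually_mono[OF right])
  with zero have "((\<lambda>c. f (c * T)) \<longlongrightarrow> L + 1) (at_right 0)" by (rule filterlim_compose)
  then have "((\<lambda>c. f (c * T) - (2 * c + 1)) \<longlongrightarrow> L + 1 - (2 * 0 + 1)) (at_right 0)"
    by (intro tendsto_intros tendsto_ident_at)
  then have "((\<lambda>c. f (c * T) - (2 * c + 1)) \<longlongrightarrow> L) (at_right 0)" by simp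
  then show "((\<lambda>c. a (c * T) c) \<longlongrightarrow> L) (at_right 0)"
    by (rule Lim_transform_eventually[OF _ eventually_mono[OF right]]) (use T in \<open>simp add: a\<close>)
  have top_ev: "\<forall>\<^sub>F c in at_top. c > (0::real)" by (rule eventually_gt_at_top)
  show "((\<lambda>c. a c 0 / (s + c)) \<longlongrightarrow> M) at_top"
  proof -
    have "((\<lambda>c. (f c - 1) / (s + c)) \<longlongrightarrow> M) at_top"
      using tendsto_affine_diff_over_at_top[OF top, of 0 1 s] by simp
    then show ?thesis by (rule Lim_transform_eventually[OF _ eventually_mono[OF top_ev]]) (simp add: a)
  qed
  have "filterlim (\<lambda>c. c * T) at_top at_top"
    using filterlim_tendsto_pos_mult_at_top[OF tendsto_const T filterlim_ident]
    by (simp add: mult.commute)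
  then have "((\<lambda>c. (f (c * T) - (2 / T * (c * T) + 1)) / (s + c * T)) \<longlongrightarrow> M - 2 / T) at_top"
    by (rule filterlim_compose[OF tendsto_affine_diff_over_at_top[OF top]])
  then show "((\<lambda>c. a (c * T) c / (s + c * T)) \<longlongrightarrow> M - 2 / T) at_top"
    by (rule Lim_transform_eventually[OF _ eventually_mono[OF top_ev]]) (use T in \<open>simp add: a\<close>)
qed

lemma rank_deficiency_cancels:
  fixes n p :: nat
  assumes "n \<ge> 1"
  defines "k \<equiv> real (p - min p (n - 1))" and "N \<equiv> real n - real p - 1"
  shows "k = 0 \<or> N + k = 0" and "N + 2 * k = \<bar>N\<bar>"
  using assms by (cases "p \<le> n - 1"; simp add: of_nat_diff)+

lemma spectral_weight_limits:
  fixes \<mu> :: "'p::finite \<Rightarrow> real" and n :: nat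
  assumes n: "n \<ge> 2" and nonneg: "\<And>j. \<mu> j \<ge> 0"
    and rank: "card {j. \<mu> j \<noteq> 0} = min CARD('p) (n - 1)"
  defines "N \<equiv> real n - real CARD('p) - 1"
  shows "sum \<mu> UNIV > 0"
    and "(spectral_weight N \<mu> \<longlongrightarrow> \<bar>N\<bar>) (at_right 0)"
    and "((\<lambda>\<alpha>. spectral_weight N \<mu> \<alpha> / \<alpha>) \<longlongrightarrow> real (n - 1) * CARD('p) / sum \<mu> UNIV) at_top"
proof -
  have "min CARD('p) (n - 1) \<noteq> 0" using n by simp
  then have "{j. \<mu> j \<noteq> 0} \<noteq> {}" using rank by (metis card.empty)
  then obtain j where "\<mu> j \<noteq> 0" by blast
  then have "\<mu> j > 0" using nonneg[of j] by simp
  then show pos: "sum \<mu> UNIV > 0" using nonneg by (intro sum_pos2[of _ j]) auto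
  have "{j. \<mu> j = 0} = UNIV - {j. \<mu> j \<noteq> 0}" by auto
  then have zeros: "card {j. \<mu> j = 0} = CARD('p) - min CARD('p) (n - 1)"
    using rank by (simp add: card_Diff_subset)
  note cancel = rank_deficiency_cancels[of n "CARD('p)", folded N_def zeros]
  have "(spectral_weight N \<mu> \<longlongrightarrow> N + 2 * real (card {j. \<mu> j = 0})) (at_right 0)"
    using nonneg \<open>\<mu> j > 0\<close> cancel(1) n by (intro tendsto_spectral_weight_at_right_0) auto
  then show "(spectral_weight N \<mu> \<longlongrightarrow> \<bar>N\<bar>) (at_right 0)"
    using cancel(2) n by simp
  have "N * CARD('p) + (real CARD('p))\<^sup>2 = real (n - 1) * CARD('p)"
    using n by (simp add: N_def of_nat_diff power2_eq_square algebra_simps)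
  then show "((\<lambda>\<alpha>. spectral_weight N \<mu> \<alpha> / \<alpha>) \<longlongrightarrow> real (n - 1) * CARD('p) / sum \<mu> UNIV) at_top"
    using tendsto_spectral_weight_over_at_top[OF nonneg pos, of N] by simp
qed

theorem proposition3:
  fixes X :: "real^'n^'p" and Sig :: "real^'p^'p"
  assumes n2: "CARD('n) \<ge> 2"
    and Sig_pd: "pos_def_mat Sig"
    and np: "\<bar>int CARD('n) - int CARD('p) - 1\<bar> > 1"
    and full_rank: "rank (inv_sqrt_mat Sig ** centered X) = min CARD('p) (CARD('n) - 1)"
  shows
    "((\<lambda>c. a_S (Wmat X Sig) CARD('n) c 0) \<longlongrightarrow>
        \<bar>real CARD('n) - real CARD('p) - 1\<bar> - 1) (at_right 0)
   \<and> ((\<lambda>c. a_S (Wmat X Sig) CARD('n) (c * trace (Wmat X Sig)) c) \<longlongrightarrow>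
        \<bar>real CARD('n) - real CARD('p) - 1\<bar> - 1) (at_right 0)
   \<and> (\<forall>s. singular_value (inv_sqrt_mat Sig ** centered X) s \<and> s > 0 \<longrightarrow>
       ((\<lambda>c. a_S (Wmat X Sig) CARD('n) c 0 / (s^2 + c)) \<longlongrightarrow>
          (real (CARD('n) - 1) * real CARD('p)) / trace (Wmat X Sig)) at_top
     \<and> ((\<lambda>c. a_S (Wmat X Sig) CARD('n) (c * trace (Wmat X Sig)) c
               / (s^2 + c * trace (Wmat X Sig))) \<longlongrightarrow>
          (real (CARD('n) - 1) * real CARD('p) - 2) / trace (Wmat X Sig)) at_top)"
proof -
  obtain Q Qi :: "real^'p^'p" and \<mu> where QQi: "Q ** Qi = mat 1" "Qi ** Q = mat 1"
    and W: "Wmat X Sig = Q ** diag_mat \<mu> ** Qi" and nonneg: "\<And>j. \<mu> j \<ge> 0"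
    and rank: "card {j. \<mu> j \<noteq> 0} = min CARD('p) (CARD('n) - 1)"
    using Wmat_similar_diag_mat[OF Sig_pd full_rank] by blast
  define N where "N = real CARD('n) - real CARD('p) - 1"
  have trace: "trace (Wmat X Sig) = sum \<mu> UNIV"
    by (simp add: W trace_similar[OF QQi] trace_diag_mat)
  note weight = spectral_weight_limits[OF n2 nonneg rank, folded N_def trace]
  have "a_S (Wmat X Sig) CARD('n) \<alpha> c0 = spectral_weight N \<mu> \<alpha> - (2 * c0 + 1)" if "\<alpha> > 0" for \<alpha> c0
  proof -
    have "\<mu> j + \<alpha> \<noteq> 0" for j using nonneg[of j] that by linarith
    then show ?thesis by (simp add: W a_S_similar_diag_mat[OF QQi] N_def)
  qed
  from ridge_weight_limits[OF this _ weight(3) weight(1), of "\<bar>N\<bar> - 1"]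
  show ?thesis
    using weight(2) by (simp add: N_def diff_divide_distrib)
qed

end
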